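(* Let $m,n,k,a$ be natural numbers with $n\geq 1$, $k\geq 1$, $m>1$ and $1\leq a\leq 9$. Then the equation $$B_nB_{n+1}\cdots B_{n+k} = a\left(\frac{10^m-1}{9}\right)$$ has no solution. That is, no product of two or more consecutive balancing numbers is a decimal repdigit with at least two digits.
   Context: The balancing sequence $(B_n)_{n\geq 0}$ is defined by $B_0=0$, $B_1=1$ and $B_{n+1}=6B_n-B_{n-1}$ for $n\geq 1$. For $1\le a\le 9$ and $m\ge 1$, the number $a\frac{10^m-1}{9}$ is the decimal integer consisting of $m$ copies of the digit $a$. *)

theory Defs
  imports Main
begin

text \<open>The balancing sequence: B 0 = 0, B 1 = 1, B (n+2) = 6 B (n+1) - B n.
  Defined over int to avoid truncated subtraction; all values are nonnegative.\<close>
fun balancing :: "nat \<Rightarrow> int" where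
  "balancing 0 = 0"
| "balancing (Suc 0) = 1"
| "balancing (Suc (Suc n)) = 6 * balancing (Suc n) - balancing n"

definition repdigit :: "nat \<Rightarrow> nat \<Rightarrow> int" where
  "repdigit a m = int a * ((10 ^ m - 1) div 9)"

end

(* Modulo 10 the balancing sequence has period 6, with residues 0, 1, 6, 5, 4, 9. Hence a product
   of three or more consecutive terms ends in the digit 0, and a product of two ends in 0 or 6;
   since a repdigit ends in its nonzero digit a, only B_n B_(n+1) = 66...6 remains. The invariant
   B_(n+1)^2 - 6 B_n B_(n+1) + B_n^2 = 1 makes 4 B_n B_(n+1) + 1 = (B_(n+1) - B_n)^2 a square,
   whereas 4 * 66...6 + 1 = 26...65 is 15 modulo 25, which is not a square residue. *)

theory Submission
  imports Defs "HOL-Number_Theory.Cong"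
begin

lemma balancing_Cassini:
  "balancing (Suc n) ^ 2 - 6 * balancing n * balancing (Suc n) + balancing n ^ 2 = 1"
  by (induction n) (simp_all add: power2_eq_square algebra_simps)

lemma balancing_consecutive_product_square:
  "(balancing (Suc n) - balancing n) ^ 2 = 4 * (balancing n * balancing (Suc n)) + 1"
  using balancing_Cassini[of n] by (simp add: power2_eq_square algebra_simps)

lemma balancing_shift_6_cong: "[balancing (n + 6) = balancing n] (mod 10)"
proof (induction n rule: balancing.induct)
  case (3 n)
  have "[6 * balancing (Suc n + 6) - balancing (n + 6) = 6 * balancing (Suc n) - balancing n] (mod 10)"
    using 3 by (intro cong_diff cong_mult cong_refl)
  moreover have "Suc (Suc n) + 6 = Suc (Suc (n + 6))" "Suc n + 6 = Suc (n + 6)" by simp_all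
  ultimately show ?case by (simp only: balancing.simps)
qed (simp_all add: cong_def eval_nat_numeral)

lemma balancing_period_cong: "[balancing (6 * q + j) = balancing j] (mod 10)"
proof (induction q)
  case (Suc q)
  have "[balancing (6 * q + j + 6) = balancing (6 * q + j)] (mod 10)"
    by (rule balancing_shift_6_cong)
  with Suc show ?case by (simp add: add.commute add.left_commute cong_trans)
qed simp

lemma balancing_cong_mod_6_shift:
  "[balancing (n + i) = balancing (n mod 6 + i)] (mod 10)"
proof -
  have "n + i = 6 * (n div 6) + (n mod 6 + i)" by simp
  then show ?thesis by (metis balancing_period_cong)
qed

lemma ten_dvd_balancing_triple_product:
  "10 dvd balancing n * balancing (n + 1) * balancing (n + 2)"
proof -
  define r where "r = n mod 6"
  have "[balancing n * balancing (n + 1) * balancing (n + 2)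
      = balancing r * balancing (r + 1) * balancing (r + 2)] (mod 10)"
    unfolding r_def using balancing_cong_mod_6_shift[of n 0]
    by (intro cong_mult balancing_cong_mod_6_shift) simp_all
  moreover have "r < 6" unfolding r_def by simp
  then have "10 dvd balancing r * balancing (r + 1) * balancing (r + 2)"
    by (auto simp: less_Suc_eq eval_nat_numeral)
  ultimately show ?thesis by (simp add: cong_dvd_iff)
qed

lemma balancing_pair_product_mod_10:
  "balancing n * balancing (n + 1) mod 10 \<in> {0, 6}"
proof -
  define r where "r = n mod 6"
  have "[balancing n * balancing (n + 1) = balancing r * balancing (r + 1)] (mod 10)"
    unfolding r_def using balancing_cong_mod_6_shift[of n 0]
    by (intro cong_mult balancing_cong_mod_6_shift) simp_all
  moreover have "r < 6" unfolding r_def by simp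
  then have "balancing r * balancing (r + 1) mod 10 \<in> {0, 6}"
    by (auto simp: less_Suc_eq eval_nat_numeral)
  ultimately show ?thesis by (simp add: cong_def)
qed

lemma repdigit_Suc: "repdigit a (Suc m) = 10 * repdigit a m + int a"
proof -
  obtain q :: int where q: "10 ^ m - 1 = 9 * q"
    using power_diff_1_eq[of "10::int" m] by auto
  then have "(10::int) ^ Suc m - 1 = 9 * (10 * q + 1)" by (simp add: algebra_simps)
  then show ?thesis using q by (simp add: repdigit_def algebra_simps)
qed

lemma repdigit_mod_10:
  assumes "m \<ge> 1" and "a \<le> 9"
  shows "repdigit a m mod 10 = int a"
proof -
  obtain j where "m = Suc j" using assms(1) by (cases m) auto
  then show ?thesis using assms(2) by (simp add: repdigit_Suc)
qed

lemma repdigit_cong_mod_100: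
  assumes "m \<ge> 2"
  shows "[repdigit a m = 11 * int a] (mod 100)"
proof -
  obtain j where "m = Suc (Suc j)" using assms by (metis add_2_eq_Suc le_Suc_ex)
  then have "repdigit a m = 100 * repdigit a j + 11 * int a" by (simp add: repdigit_Suc)
  then show ?thesis by (simp add: cong_def)
qed

lemma square_not_cong_15_mod_25: "\<not> [(x::int) ^ 2 = 15] (mod 25)"
proof
  assume sq: "[x ^ 2 = 15] (mod 25)"
  then have "[x ^ 2 = 15] (mod 5)" by (rule cong_dvd_modulus) simp
  then have "5 dvd x ^ 2" by (simp add: cong_dvd_iff)
  then have "5 dvd x" using prime_dvd_power[of "5::int" x 2] by simp
  then obtain y where "x = 5 * y" by blast
  then have "[0 = 15] (mod (25::int))" using sq by (simp add: power_mult_distrib cong_def)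
  then show False by (simp add: cong_def)
qed

lemma balancing_pair_product_ne_repdigit:
  assumes "m \<ge> 2" and "1 \<le> a" and "a \<le> 9"
  shows "balancing n * balancing (n + 1) \<noteq> repdigit a m"
proof
  assume eq: "balancing n * balancing (n + 1) = repdigit a m"
  have "int a \<in> {0, 6}"
    using balancing_pair_product_mod_10[of n] repdigit_mod_10[of m a] assms eq by simp
  with assms(2) have "a = 6" by auto
  then have "[4 * (balancing n * balancing (n + 1)) + 1 = 4 * 66 + 1] (mod 100)"
    using eq repdigit_cong_mod_100[OF assms(1), of a] by (intro cong_add cong_mult) auto
  then have "[4 * (balancing n * balancing (n + 1)) + 1 = 4 * 66 + 1] (mod 25)"
    by (rule cong_dvd_modulus) simp
  then have "[(balancing (Suc n) - balancing n) ^ 2 = 15] (mod 25)"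
    by (simp add: balancing_consecutive_product_square cong_def)
  then show False using square_not_cong_15_mod_25 by blast
qed

theorem theorem2:
  fixes m n k a :: nat
  assumes "n \<ge> 1" and "k \<ge> 1" and "m > 1" and "1 \<le> a" and "a \<le> 9"
  shows "(\<Prod>i\<in>{n..n+k}. balancing i) \<noteq> repdigit a m"
proof
  assume eq: "(\<Prod>i\<in>{n..n+k}. balancing i) = repdigit a m"
  have "m \<ge> 2" using assms(3) by simp
  consider "k = 1" | "k \<ge> 2" using assms(2) by linarith
  then show False
  proof cases
    case 1
    then have "(\<Prod>i\<in>{n..n+k}. balancing i) = balancing n * balancing (n + 1)" by simp
    then show False using eq balancing_pair_product_ne_repdigit \<open>m \<ge> 2\<close> assms(4,5) by metis
  next
    case 2
    then have "balancing n * balancing (n + 1) * balancing (n + 2) dvd (\<Prod>i\<in>{n..n+k}. balancing i)"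
      using prod_dvd_prod_subset[of "{n..n+k}" "{n, n + 1, n + 2}" balancing] by (simp add: mult.assoc)
    then have "10 dvd repdigit a m"
      using ten_dvd_balancing_triple_product eq dvd_trans by metis
    then show False using repdigit_mod_10[of m a] assms(3-5) by simp
  qed
qed

end
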